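(* Let $\alpha,\beta\in[0,1)$ and $\mathcal E(\alpha,\beta)=\{x\in\mathbb R:\mathcal D(\beta,x)=0\text{ or }\Psi(\alpha,\beta,x)=0\}$. Then $\mathcal E(\alpha,\beta)$ consists exactly of the three zeros of $\mathcal D(\beta,\cdot)$ together with: the value $\frac32$ if $\alpha=0$; the value $\frac12$ if $\alpha=\frac12$; and the value $1+\frac12\cos(2\pi\alpha)$ if $3\alpha+\beta\equiv\frac12\pmod 1$.
   Context: $\mathcal D(\beta,\lambda)=-\lambda^3+3\lambda^2-\frac{45}{16}\lambda+\frac{13}{16}-\frac1{32}\cos2\pi\beta$; $\Psi(\alpha,\beta,\lambda)=(1-\lambda)^2-\frac1{16}+\frac{1-\lambda}{4}(2e^{-2\pi i\alpha}+e^{-2\pi i(2\alpha+\beta)})+\frac1{16}(e^{-4\pi i\alpha}+2e^{-2\pi i(\alpha+\beta)})$. *)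

theory Defs
  imports Complex_Main
begin

definition D :: "real \<Rightarrow> real \<Rightarrow> real" where
  "D \<beta> lam = - (lam^3) + 3 * lam^2 - 45/16 * lam + 13/16 - 1/32 * cos (2 * pi * \<beta>)"

definition Psi :: "real \<Rightarrow> real \<Rightarrow> complex \<Rightarrow> complex" where
  "Psi \<alpha> \<beta> lam = (1 - lam)^2 - 1/16
     + (1 - lam) / 4 * (2 * exp (- 2 * pi * \<i> * \<alpha>) + exp (- 2 * pi * \<i> * (2 * \<alpha> + \<beta>)))
     + 1/16 * (exp (- 4 * pi * \<i> * \<alpha>) + 2 * exp (- 2 * pi * \<i> * (\<alpha> + \<beta>)))"

definition E :: "real \<Rightarrow> real \<Rightarrow> real set" where
  "E \<alpha> \<beta> = {x. D \<beta> x = 0 \<or> Psi \<alpha> \<beta> (complex_of_real x) = 0}"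

end

(* Put x = 4(1 - lambda), u = exp(-2 pi i alpha), v = exp(-2 pi i beta). Then
   64 D = x^3 - 3x - (v + conj v) and 16 Psi = x^2 - 1 + x (2u + u^2 v) + u^2 + 2uv.
   For real lambda, Psi vanishes together with its conjugate, and eliminating between the two
   quadratics gives 64 D * (x + 2 conj u) = 0. Hence a real zero of Psi that is not a zero of D
   forces conj u = -x/2 to be real, i.e. alpha in {0, 1/2} and lambda = 1 + cos(2 pi alpha)/2;
   conversely Psi does vanish there. Finally x = -2 cos t turns x^3 - 3x into -2 cos 3t, so D
   vanishes at 1 + cos(2 pi alpha)/2 whenever cos(2 pi beta) = -cos(6 pi alpha), in particular
   when 3 alpha + beta = 1/2 mod 1. *)

theory Submission
  imports Defs
begin

definition psi_poly :: "'a::comm_ring_1 \<Rightarrow> 'a \<Rightarrow> 'a \<Rightarrow> 'a" where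
  "psi_poly u v x = x^2 - 1 + x * (2 * u + u^2 * v) + u^2 + 2 * u * v"

lemma psi_poly_common_root:
  fixes u v r w x :: "'a::idom"
  assumes "psi_poly u v x = 0" "psi_poly r w x = 0" "u * r = 1" "v * w = 1"
  shows "(x^3 - 3 * x - (v + w)) * (x + 2 * r) = 0"
  using assms unfolding psi_poly_def by algebra

lemma psi_poly_root_minus_2u:
  assumes "u^2 = 1"
  shows "psi_poly u v (- 2 * u) = 0"
proof -
  have "psi_poly u v (- 2 * u) = (u^2 - 1) * (1 - 2 * u * v)"
    unfolding psi_poly_def by (simp add: algebra_simps power2_eq_square power3_eq_cube)
  with assms show ?thesis by simp
qed

lemma cnj_psi_poly: "cnj (psi_poly u v x) = psi_poly (cnj u) (cnj v) (cnj x)"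
  unfolding psi_poly_def by simp

lemma Psi_eq_psi_poly:
  "16 * Psi \<alpha> \<beta> (of_real lam) =
     psi_poly (exp (- 2 * pi * \<i> * \<alpha>)) (exp (- 2 * pi * \<i> * \<beta>)) (of_real (4 * (1 - lam)))"
proof -
  define u where "u = exp (- 2 * pi * \<i> * \<alpha>)"
  define v where "v = exp (- 2 * pi * \<i> * \<beta>)"
  have "exp (- 2 * pi * \<i> * (2 * of_real \<alpha> + of_real \<beta>)) = u^2 * v"
       "exp (- 4 * pi * \<i> * of_real \<alpha>) = u^2"
       "exp (- 2 * pi * \<i> * (of_real \<alpha> + of_real \<beta>)) = u * v"
    unfolding u_def v_def power2_eq_square by (simp_all add: exp_add[symmetric] algebra_simps)
  then show ?thesis
    unfolding Psi_def psi_poly_def u_def[symmetric] v_def[symmetric]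
    by (simp add: field_simps power2_eq_square)
qed

lemma D_eq_cubic:
  "64 * D \<beta> lam = (4 * (1 - lam))^3 - 3 * (4 * (1 - lam)) - 2 * cos (2 * pi * \<beta>)"
  unfolding D_def by (simp add: algebra_simps power2_eq_square power3_eq_cube)

lemma D_root_at_resonance:
  assumes "3 * \<alpha> + \<beta> - 1/2 \<in> \<int>"
  shows "D \<beta> (1 + 1/2 * cos (2 * pi * \<alpha>)) = 0"
proof -
  obtain k :: int where k: "\<beta> = k + 1/2 - 3 * \<alpha>"
    using assms by (metis Ints_cases add.commute diff_add_cancel diff_diff_eq2)
  have "2 * pi * \<beta> = 2 * pi * of_int k + (pi - 3 * (2 * pi * \<alpha>))"
    unfolding k by (simp add: algebra_simps)
  then have "cos (2 * pi * \<beta>) = - cos (3 * (2 * pi * \<alpha>))"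
    by (simp add: cos_add cos_diff)
  then have "64 * D \<beta> (1 + 1/2 * cos (2 * pi * \<alpha>)) = 0"
    unfolding D_eq_cubic cos_treble_cos by (simp add: algebra_simps power3_eq_cube)
  then show ?thesis by simp
qed

lemma Psi_real_root_iff:
  assumes "D \<beta> lam \<noteq> 0"
  shows "Psi \<alpha> \<beta> (of_real lam) = 0 \<longleftrightarrow> sin (2 * pi * \<alpha>) = 0 \<and> lam = 1 + 1/2 * cos (2 * pi * \<alpha>)"
proof -
  define u where "u = exp (- 2 * pi * \<i> * \<alpha>)"
  define v where "v = exp (- 2 * pi * \<i> * \<beta>)"
  define x where "x = complex_of_real (4 * (1 - lam))"
  have Psi: "16 * Psi \<alpha> \<beta> (of_real lam) = psi_poly u v x"
    unfolding u_def v_def x_def by (rule Psi_eq_psi_poly)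
  have u: "u = cis (- 2 * pi * \<alpha>)" and v: "v = cis (- 2 * pi * \<beta>)"
    unfolding u_def v_def by (simp_all add: cis_conv_exp algebra_simps)
  show ?thesis
  proof
    assume "Psi \<alpha> \<beta> (of_real lam) = 0"
    then have "psi_poly u v x = 0" "psi_poly (cnj u) (cnj v) x = 0"
      using Psi cnj_psi_poly[of u v x] by (simp_all add: x_def)
    moreover have "u * cnj u = 1" "v * cnj v = 1"
      unfolding u v by (simp_all add: cis_cnj cis_mult)
    ultimately have "(x^3 - 3 * x - (v + cnj v)) * (x + 2 * cnj u) = 0"
      by (rule psi_poly_common_root)
    moreover have "x^3 - 3 * x - (v + cnj v) = of_real (64 * D \<beta> lam)"
      unfolding D_eq_cubic x_def v by (simp add: complex_eq_iff)
    ultimately have "x + 2 * cnj u = 0" using assms by simp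
    then show "sin (2 * pi * \<alpha>) = 0 \<and> lam = 1 + 1/2 * cos (2 * pi * \<alpha>)"
      unfolding x_def u by (auto simp: complex_eq_iff)
  next
    assume "sin (2 * pi * \<alpha>) = 0 \<and> lam = 1 + 1/2 * cos (2 * pi * \<alpha>)"
    then have "x = - 2 * u" "u^2 = 1"
      unfolding x_def u using sin_cos_squared_add[of "2 * pi * \<alpha>"]
      by (auto simp: complex_eq_iff power2_eq_square)
    then show "Psi \<alpha> \<beta> (of_real lam) = 0"
      using Psi psi_poly_root_minus_2u[of u v] by simp
  qed
qed

lemma sin_2pi_eq_0_iff:
  assumes "0 \<le> \<alpha>" "\<alpha> < 1"
  shows "sin (2 * pi * \<alpha>) = 0 \<longleftrightarrow> \<alpha> = 0 \<or> \<alpha> = 1/2"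
proof
  assume "sin (2 * pi * \<alpha>) = 0"
  then obtain i :: int where "2 * pi * \<alpha> = i * pi"
    by (auto simp: sin_zero_iff_int2)
  then have "2 * \<alpha> = i" by simp
  with assms have "i = 0 \<or> i = 1" by linarith
  with \<open>2 * \<alpha> = i\<close> show "\<alpha> = 0 \<or> \<alpha> = 1/2" by auto
  \<comment> \<open>substitute first: simp would normalise \<open>\<alpha> = 1/2\<close> to \<open>\<alpha> * 2 = 1\<close> and get stuck\<close>
qed (elim disjE; hypsubst; simp)

theorem proposition4p4:
  fixes \<alpha> \<beta> :: real
  assumes "0 \<le> \<alpha>" "\<alpha> < 1" "0 \<le> \<beta>" "\<beta> < 1"
  shows "E \<alpha> \<beta> =
      {x. D \<beta> x = 0}
      \<union> (if \<alpha> = 0 then {3/2} else {})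
      \<union> (if \<alpha> = 1/2 then {1/2} else {})
      \<union> (if 3 * \<alpha> + \<beta> - 1/2 \<in> \<int> then {1 + 1/2 * cos (2 * pi * \<alpha>)} else {})"
proof -
  have extra_roots: "{x. sin (2 * pi * \<alpha>) = 0 \<and> x = 1 + 1/2 * cos (2 * pi * \<alpha>)} =
      (if \<alpha> = 0 then {3/2} else {}) \<union> (if \<alpha> = 1/2 then {1/2} else {})"
  proof (cases "\<alpha> = 1/2")
    case True
    show ?thesis unfolding True by auto
  next
    case False
    then show ?thesis using sin_2pi_eq_0_iff[OF assms(1,2)] by auto
  qed
  have "E \<alpha> \<beta> = {x. D \<beta> x = 0} \<union> {x. sin (2 * pi * \<alpha>) = 0 \<and> x = 1 + 1/2 * cos (2 * pi * \<alpha>)}"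
    unfolding E_def using Psi_real_root_iff by auto
  then show ?thesis
    unfolding extra_roots using D_root_at_resonance[of \<alpha> \<beta>] by auto
qed

end
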